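(* Let $n\ge1$, $1\le s\le n$, $A_1,\dots,A_s\subset\mathbb Z^n$ finite, $m_1+\dots+m_s=n$ nonnegative integers, let $b$ be a lifting in general position, let $F_0\subset\cdots\subset F_n=\mathbb R^n$ be a generic affine flag, let $(m_i(d))_{d}$ be sequences as in the context, and let $1\le d\le n$. Let $\boldsymbol\xi$ be a vertex of $X'_d$, and let $q\in\{1,\dots,s\}$ be the unique index with $m_q(\boldsymbol\xi)=m_q(d-1)+1$. Then there are exactly $m_q(\boldsymbol\xi)+1=m_q(d-1)+2$ edges of $X'_d$ having $\boldsymbol\xi$ as an endpoint. Moreover, these edges can be written as $\{\boldsymbol\xi+t\,\Delta_j\boldsymbol\xi: t\in(0,I_j)\}$, $j=1,\dots,m_q(\boldsymbol\xi)+1$, where each $\Delta_j\boldsymbol\xi\in\mathbb R^n$ and each $I_j$ is either a strictly positive real number or $+\infty$, and the balancing condition $\sum_j \Delta_j\boldsymbol\xi=0$ holds.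
   Context: A lifting is a function $b:A_1\sqcup\cdots\sqcup A_s\to\mathbb R$, written $b(i,\mathbf a)$. It is in general position if for every subset $S$ of $\{[-\mathrm e_i,\mathbf a,b(i,\mathbf a)]:\mathbf a\in A_i\}\subset\mathbb R^s\times\mathbb R^n\times\mathbb R$ of cardinality at most $n+s+1$, either the vectors of $S$ are linearly independent or $[0,\dots,0,1]$ is a linear combination of them. For $\boldsymbol\xi\in(\mathbb R^n)^*$, $\lambda_i(\boldsymbol\xi)=\max_{\mathbf a\in A_i}(\boldsymbol\xi(\mathbf a)-b(i,\mathbf a))$, and $m_i(\boldsymbol\xi)+1$ is the number of $\mathbf a\in A_i$ attaining it; these pairs $(i,\mathbf a)$ are the active constraints at $\boldsymbol\xi$. The flag consists of affine subspaces with $\dim F_d=d$. For each $i$, $(m_i(d))_{d=0,\dots,n}$ is non-decreasing in $\mathbb N_0$ with $m_i(0)=0$, $m_i(n)=m_i$, $\sum_i m_i(d)=d$. $X'_d=\{\boldsymbol\xi\in F_d: m_i(\boldsymbol\xi)\ge m_i(d-1)\ \forall i\}$. A vertex of $X'_d$ is a point $\boldsymbol\xi\in X'_d$ with $\sum_i m_i(\boldsymbol\xi)=d$. An edge of $X'_d$ is a one-dimensional set of the form $\{\boldsymbol\eta\in F_d:\ \text{the set of active constraints at }\boldsymbol\eta\text{ equals }W\}$, where $W$ contains exactly $m_i(d-1)+1$ elements of each $A_i$. *)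

theory Defs
  imports "HOL-Analysis.Analysis"
begin

text \<open>Index set {1..s} is rendered as a finite type 's, ambient space R^n as real^'n.
  A point xi of the dual space acts on a by the inner product xi \<bullet> a.\<close>

definition lam :: "('s \<Rightarrow> (real^'n) set) \<Rightarrow> ('s \<Rightarrow> real^'n \<Rightarrow> real) \<Rightarrow> real^'n \<Rightarrow> 's \<Rightarrow> real" where
  "lam A b xi i = Max ((\<lambda>a. xi \<bullet> a - b i a) ` A i)"

definition active :: "('s \<Rightarrow> (real^'n) set) \<Rightarrow> ('s \<Rightarrow> real^'n \<Rightarrow> real) \<Rightarrow> real^'n \<Rightarrow> ('s \<times> (real^'n)) set" where
  "active A b xi = {(i, a). a \<in> A i \<and> xi \<bullet> a - b i a = lam A b xi i}"

definition mult_at :: "('s \<Rightarrow> (real^'n) set) \<Rightarrow> ('s \<Rightarrow> real^'n \<Rightarrow> real) \<Rightarrow> real^'n \<Rightarrow> 's \<Rightarrow> nat" where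
  "mult_at A b xi i = card {a \<in> A i. xi \<bullet> a - b i a = lam A b xi i} - 1"

definition lifting_vectors :: "('s::finite \<Rightarrow> (real^'n) set) \<Rightarrow> ('s \<Rightarrow> real^'n \<Rightarrow> real) \<Rightarrow> ((real^'s) \<times> (real^'n) \<times> real) set" where
  "lifting_vectors A b = {(- axis i 1, a, b i a) | i a. a \<in> A i}"

definition general_position :: "('s::finite \<Rightarrow> (real^'n::finite) set) \<Rightarrow> ('s \<Rightarrow> real^'n \<Rightarrow> real) \<Rightarrow> bool" where
  "general_position A b \<longleftrightarrow>
     (\<forall>S \<subseteq> lifting_vectors A b. card S \<le> CARD('n) + CARD('s) + 1 \<longrightarrow>
        independent S \<or> (0, 0, 1) \<in> span S)"

definition affine_flag :: "(nat \<Rightarrow> (real^'n::finite) set) \<Rightarrow> bool" where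
  "affine_flag F \<longleftrightarrow>
     (\<forall>d < CARD('n). F d \<subseteq> F (Suc d)) \<and>
     (\<forall>d \<le> CARD('n). affine (F d) \<and> aff_dim (F d) = int d) \<and>
     F (CARD('n)) = UNIV"

text \<open>Linear space of directions along which all constraints in W stay tied.\<close>
definition tie_space :: "('s \<times> (real^'n)) set \<Rightarrow> (real^'n) set" where
  "tie_space W = {v. \<forall>i a a'. (i, a) \<in> W \<longrightarrow> (i, a') \<in> W \<longrightarrow> v \<bullet> (a - a') = 0}"

definition diffs :: "(real^'n) set \<Rightarrow> (real^'n) set" where
  "diffs S = {x - y | x y. x \<in> S \<and> y \<in> S}"

text \<open>Genericity of the flag: the direction space of every F_d meets every tie space
  transversally (intersection of linear subspaces in general position).\<close>
definition generic_flag :: "('s \<Rightarrow> (real^'n::finite) set) \<Rightarrow> (nat \<Rightarrow> (real^'n) set) \<Rightarrow> bool" where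
  "generic_flag A F \<longleftrightarrow>
     (\<forall>d \<le> CARD('n). \<forall>W \<subseteq> Sigma UNIV A.
        dim (diffs (F d) \<inter> tie_space W) = d + dim (tie_space W) - CARD('n))"

definition admissible_seq :: "('s::finite \<Rightarrow> nat) \<Rightarrow> nat \<Rightarrow> (nat \<Rightarrow> 's \<Rightarrow> nat) \<Rightarrow> bool" where
  "admissible_seq m n md \<longleftrightarrow>
     (\<forall>i. md 0 i = 0 \<and> md n i = m i \<and> (\<forall>d < n. md d i \<le> md (Suc d) i)) \<and>
     (\<forall>d \<le> n. (\<Sum>i\<in>UNIV. md d i) = d)"

definition Xd :: "('s \<Rightarrow> (real^'n) set) \<Rightarrow> ('s \<Rightarrow> real^'n \<Rightarrow> real) \<Rightarrow> (nat \<Rightarrow> (real^'n) set)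
                   \<Rightarrow> (nat \<Rightarrow> 's \<Rightarrow> nat) \<Rightarrow> nat \<Rightarrow> (real^'n) set" where
  "Xd A b F md d = {xi \<in> F d. \<forall>i. md (d - 1) i \<le> mult_at A b xi i}"

definition is_vertex :: "('s::finite \<Rightarrow> (real^'n) set) \<Rightarrow> ('s \<Rightarrow> real^'n \<Rightarrow> real) \<Rightarrow> (nat \<Rightarrow> (real^'n) set)
                   \<Rightarrow> (nat \<Rightarrow> 's \<Rightarrow> nat) \<Rightarrow> nat \<Rightarrow> real^'n \<Rightarrow> bool" where
  "is_vertex A b F md d xi \<longleftrightarrow> xi \<in> Xd A b F md d \<and> (\<Sum>i\<in>UNIV. mult_at A b xi i) = d"

definition is_edge :: "('s \<Rightarrow> (real^'n) set) \<Rightarrow> ('s \<Rightarrow> real^'n \<Rightarrow> real) \<Rightarrow> (nat \<Rightarrow> (real^'n) set)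
                   \<Rightarrow> (nat \<Rightarrow> 's \<Rightarrow> nat) \<Rightarrow> nat \<Rightarrow> (real^'n) set \<Rightarrow> bool" where
  "is_edge A b F md d E \<longleftrightarrow>
     (\<exists>W. (\<forall>i. card {a \<in> A i. (i, a) \<in> W} = md (d - 1) i + 1) \<and>
          E = {eta \<in> F d. active A b eta = W} \<and> aff_dim E = 1)"

definition is_endpoint :: "real^'n \<Rightarrow> (real^'n) set \<Rightarrow> bool" where
  "is_endpoint xi E \<longleftrightarrow> xi \<in> closure E \<and> xi \<notin> E"

end

theory Submission
  imports Defs
begin

text \<open>At a vertex \<open>\<xi>\<close> of \<open>X'\<^sub>d\<close> the active set has \<open>d + s\<close> elements, so by general
  position its blocks of differences span \<open>d\<close> dimensions, and by genericity of the flag no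
  nonzero direction of \<open>F\<^sub>d\<close> keeps all active constraints tied. For each of the
  \<open>m\<^sub>q(\<xi>) + 1\<close> active points \<open>a\<close> of \<open>A\<^sub>q\<close>, releasing \<open>(q, a)\<close> frees exactly one
  direction \<open>\<Delta>\<^sub>a\<close> of \<open>F\<^sub>d\<close>, normalised so that \<open>a\<close> drops below its block at unit rate.
  Moving from \<open>\<xi>\<close> along \<open>\<Delta>\<^sub>a\<close> keeps the remaining constraints active exactly on an open
  interval of times \<open>(0, I\<^sub>a)\<close>, and these rays are precisely the edges ending at \<open>\<xi>\<close>.
  Finally \<open>\<Sum>\<^sub>a \<Delta>\<^sub>a\<close> ties every block of the active set, hence vanishes.\<close>

section \<open>Active constraints\<close>

lemma lam_ge:
  assumes "finite (A i)" "x \<in> A i"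
  shows "eta \<bullet> x - b i x \<le> lam A b eta i"
  unfolding lam_def using assms by auto

lemma lam_attained:
  assumes "finite (A i)" "A i \<noteq> {}"
  obtains x where "x \<in> A i" "eta \<bullet> x - b i x = lam A b eta i"
proof -
  have "lam A b eta i \<in> (\<lambda>a. eta \<bullet> a - b i a) ` A i"
    unfolding lam_def using assms by (intro Max_in) auto
  then show ?thesis using that by auto
qed

lemma mem_active_iff:
  assumes "finite (A i)"
  shows "(i, x) \<in> active A b eta \<longleftrightarrow> x \<in> A i \<and> (\<forall>y\<in>A i. eta \<bullet> y - b i y \<le> eta \<bullet> x - b i x)"
proof
  assume "(i, x) \<in> active A b eta"
  then show "x \<in> A i \<and> (\<forall>y\<in>A i. eta \<bullet> y - b i y \<le> eta \<bullet> x - b i x)"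
    using lam_ge[of A i, OF assms] unfolding active_def by fastforce
next
  assume h: "x \<in> A i \<and> (\<forall>y\<in>A i. eta \<bullet> y - b i y \<le> eta \<bullet> x - b i x)"
  have "lam A b eta i = eta \<bullet> x - b i x"
    unfolding lam_def using assms h by (intro antisym Max.boundedI Max_ge) auto
  then show "(i, x) \<in> active A b eta" using h unfolding active_def by auto
qed

lemma active_subset_Sigma: "active A b eta \<subseteq> Sigma UNIV A"
  unfolding active_def by auto

lemma card_active_fibre:
  assumes "finite (A i)" "A i \<noteq> {}"
  shows "card {a \<in> A i. (i, a) \<in> active A b eta} = mult_at A b eta i + 1"
proof -
  have eq: "{a \<in> A i. (i, a) \<in> active A b eta} = {a \<in> A i. eta \<bullet> a - b i a = lam A b eta i}"
    unfolding active_def by auto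
  obtain x where "x \<in> A i" "eta \<bullet> x - b i x = lam A b eta i"
    using lam_attained[of A i, OF assms] .
  then have "{a \<in> A i. eta \<bullet> a - b i a = lam A b eta i} \<noteq> {}" by auto
  then have "card {a \<in> A i. eta \<bullet> a - b i a = lam A b eta i} \<noteq> 0"
    using assms(1) by simp
  then show ?thesis unfolding eq mult_at_def by simp
qed

lemma closed_active_locus:
  assumes "finite (A i)"
  shows "closed {eta. (i, x) \<in> active A b eta}"
proof (cases "x \<in> A i")
  case True
  have "{eta. (i, x) \<in> active A b eta} = (\<Inter>y\<in>A i. {eta. eta \<bullet> y - b i y \<le> eta \<bullet> x - b i x})"
    using True by (auto simp: mem_active_iff[where A=A, OF assms])
  also have "closed \<dots>"
    by (intro closed_INT ballI closed_Collect_le continuous_intros)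
  finally show ?thesis .
next
  case False
  then have "{eta. (i, x) \<in> active A b eta} = {}" unfolding active_def by auto
  then show ?thesis by simp
qed

lemma active_eq_iff_strict:
  assumes fin: "\<And>i. finite (A i)" and W: "W \<subseteq> Sigma UNIV A" and r: "\<And>i. (i, r i) \<in> W"
    and tied: "\<And>i x. (i, x) \<in> W \<Longrightarrow> eta \<bullet> x - b i x = eta \<bullet> r i - b i (r i)"
  shows "active A b eta = W \<longleftrightarrow>
           (\<forall>(i, x) \<in> Sigma UNIV A - W. eta \<bullet> x - b i x < eta \<bullet> r i - b i (r i))"
proof
  assume act: "active A b eta = W"
  show "\<forall>(i, x) \<in> Sigma UNIV A - W. eta \<bullet> x - b i x < eta \<bullet> r i - b i (r i)"
  proof clarify
    fix i x assume x: "x \<in> A i" "(i, x) \<notin> W"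
    have "eta \<bullet> x - b i x \<le> eta \<bullet> r i - b i (r i)"
      using r[of i] x(1) act by (auto simp: mem_active_iff[where A=A, OF fin])
    moreover have "eta \<bullet> x - b i x \<noteq> eta \<bullet> r i - b i (r i)"
    proof
      assume "eta \<bullet> x - b i x = eta \<bullet> r i - b i (r i)"
      then have "(i, x) \<in> active A b eta"
        using r[of i] x(1) act by (auto simp: mem_active_iff[where A=A, OF fin])
      then show False using act x(2) by simp
    qed
    ultimately show "eta \<bullet> x - b i x < eta \<bullet> r i - b i (r i)" by simp
  qed
next
  assume strict: "\<forall>(i, x) \<in> Sigma UNIV A - W. eta \<bullet> x - b i x < eta \<bullet> r i - b i (r i)"
  have "(i, x) \<in> active A b eta \<longleftrightarrow> (i, x) \<in> W" for i x
  proof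
    assume act: "(i, x) \<in> active A b eta"
    show "(i, x) \<in> W"
    proof (rule ccontr)
      assume "(i, x) \<notin> W"
      moreover have "x \<in> A i" "eta \<bullet> r i - b i (r i) \<le> eta \<bullet> x - b i x"
        using act r[of i] W by (auto simp: mem_active_iff[where A=A, OF fin])
      ultimately show False using strict[rule_format, of "(i, x)"] by auto
    qed
  next
    assume x: "(i, x) \<in> W"
    have "eta \<bullet> y - b i y \<le> eta \<bullet> x - b i x" if "y \<in> A i" for y
      using that strict[rule_format, of "(i, y)"] tied[OF x] tied[of i y] by (cases "(i, y) \<in> W") auto
    then show "(i, x) \<in> active A b eta"
      using x W by (auto simp: mem_active_iff[where A=A, OF fin])
  qed
  then show "active A b eta = W" by auto
qed

lemma active_along_line:
  assumes fin: "\<And>i. finite (A i)" and W: "W \<subseteq> Sigma UNIV A" and r: "\<And>i. (i, r i) \<in> W"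
    and tied: "\<And>i x. (i, x) \<in> W \<Longrightarrow> xi \<bullet> x - b i x = xi \<bullet> r i - b i (r i)"
    and v: "v \<in> tie_space W"
  shows "active A b (xi + t *\<^sub>R v) = W \<longleftrightarrow>
           (\<forall>(i, x) \<in> Sigma UNIV A - W.
              (xi \<bullet> x - b i x) - (xi \<bullet> r i - b i (r i)) + t * (v \<bullet> (x - r i)) < 0)"
proof -
  let ?eta = "xi + t *\<^sub>R v"
  have level_diff: "?eta \<bullet> x - b i x - (?eta \<bullet> r i - b i (r i))
                      = (xi \<bullet> x - b i x) - (xi \<bullet> r i - b i (r i)) + t * (v \<bullet> (x - r i))" for i x
    by (simp add: inner_add_left inner_diff_right algebra_simps)
  have "v \<bullet> (x - r i) = 0" if "(i, x) \<in> W" for i x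
    using v that r unfolding tie_space_def by blast
  then have "?eta \<bullet> x - b i x = ?eta \<bullet> r i - b i (r i)" if "(i, x) \<in> W" for i x
    using level_diff[of x i] tied[OF that] that by simp
  then have "active A b ?eta = W \<longleftrightarrow>
               (\<forall>(i, x) \<in> Sigma UNIV A - W. ?eta \<bullet> x - b i x < ?eta \<bullet> r i - b i (r i))"
    by (rule active_eq_iff_strict[OF fin W r])
  also have "\<dots> \<longleftrightarrow> (\<forall>(i, x) \<in> Sigma UNIV A - W.
              (xi \<bullet> x - b i x) - (xi \<bullet> r i - b i (r i)) + t * (v \<bullet> (x - r i)) < 0)"
    using level_diff by (intro ball_cong refl) (auto simp: algebra_simps)
  finally show ?thesis .
qed

lemma diff_mem_tie_space:
  assumes "W \<subseteq> active A b eta" "W \<subseteq> active A b eta'"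
  shows "eta - eta' \<in> tie_space W"
  unfolding tie_space_def
proof (intro CollectI allI impI)
  fix i x y assume "(i, x) \<in> W" "(i, y) \<in> W"
  then have "eta \<bullet> x - b i x = lam A b eta i" "eta \<bullet> y - b i y = lam A b eta i"
    "eta' \<bullet> x - b i x = lam A b eta' i" "eta' \<bullet> y - b i y = lam A b eta' i"
    using assms unfolding active_def by blast+
  then show "(eta - eta') \<bullet> (x - y) = 0" by (simp add: inner_diff_left inner_diff_right)
qed

section \<open>Tie spaces and general position\<close>

definition block_diffs :: "('s \<times> (real^'n)) set \<Rightarrow> (real^'n) set" where
  "block_diffs W = {a - a' | i a a'. (i, a) \<in> W \<and> (i, a') \<in> W}"

lemma tie_space_eq_orthogonal: "tie_space W = {y. \<forall>x\<in>span (block_diffs W). orthogonal x y}"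
proof -
  have "tie_space W = {y. \<forall>x\<in>block_diffs W. orthogonal x y}"
    unfolding tie_space_def block_diffs_def orthogonal_def by (auto simp: inner_commute)
  also have "\<dots> = {y. \<forall>x\<in>span (block_diffs W). orthogonal x y}"
    by (meson orthogonal_commute orthogonal_to_span span_base)
  finally show ?thesis .
qed

lemma dim_tie_space_add_dim_block_diffs:
  "dim (tie_space (W :: ('s \<times> (real^'n::finite)) set)) + dim (block_diffs W) = CARD('n)"
proof -
  have "dim {y \<in> UNIV. \<forall>x\<in>span (block_diffs W). orthogonal x y} + dim (span (block_diffs W))
          = dim (UNIV :: (real^'n) set)"
    by (rule dim_subspace_orthogonal_to_vectors) auto
  then show ?thesis by (simp add: tie_space_eq_orthogonal)
qed

lemma subspace_tie_space: "subspace (tie_space W)"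
  unfolding tie_space_def subspace_def by (simp add: inner_add_left)

lemma dim_block_diffs_le:
  fixes W :: "('s::finite \<times> (real^'n::finite)) set"
  assumes "finite W" "\<And>i. (i, r i) \<in> W"
  shows "dim (block_diffs W) \<le> card W - CARD('s)"
proof -
  let ?Z = "(\<lambda>i. (i, r i)) ` (UNIV :: 's set)"
  let ?G = "(\<lambda>(i, a). a - r i) ` (W - ?Z)"
  have key: "a - r i \<in> span ?G" if "(i, a) \<in> W" for i a
  proof (cases "(i, a) \<in> ?Z")
    case True then show ?thesis by (auto simp: span_zero)
  next
    case False then show ?thesis
      using that by (intro span_base) (auto intro!: image_eqI[of _ _ "(i, a)"])
  qed
  have "block_diffs W \<subseteq> span ?G"
  proof
    fix v assume "v \<in> block_diffs W"
    then obtain i a a' where v: "v = a - a'" "(i, a) \<in> W" "(i, a') \<in> W"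
      unfolding block_diffs_def by auto
    have "(a - r i) - (a' - r i) \<in> span ?G" by (rule span_diff[OF key[OF v(2)] key[OF v(3)]])
    then show "v \<in> span ?G" using v by simp
  qed
  then have "dim (block_diffs W) \<le> card ?G" using assms by (intro dim_le_card) auto
  also have "\<dots> \<le> card (W - ?Z)" by (rule card_image_le) (use assms in auto)
  also have "\<dots> = card W - card ?Z" using assms by (intro card_Diff_subset) auto
  also have "card ?Z = CARD('s)" by (rule card_image) (auto simp: inj_on_def)
  finally show ?thesis .
qed

definition lift :: "('s::finite \<Rightarrow> real^'n \<Rightarrow> real) \<Rightarrow> 's \<times> (real^'n) \<Rightarrow> (real^'s) \<times> (real^'n) \<times> real" where
  "lift b = (\<lambda>(i, a). (- axis i 1, a, b i a))"

lemma inj_lift: "inj (lift b)"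
  unfolding inj_def lift_def by (auto simp: axis_eq_axis)

lemma lifting_vectors_eq: "lifting_vectors A b = lift b ` Sigma UNIV A"
  unfolding lifting_vectors_def lift_def by auto

text \<open>The lifts of active constraints lie in the hyperplane orthogonal to
  \<open>(\<lambda>, \<xi>, -1)\<close>, which misses \<open>(0, 0, 1)\<close>; so general position forces independence.\<close>
lemma independent_lift_active:
  fixes A :: "'s::finite \<Rightarrow> (real^'n::finite) set"
  assumes gp: "general_position A b" and fin: "\<And>i. finite (A i)"
    and W: "W \<subseteq> active A b xi" and card: "card W \<le> CARD('n) + CARD('s) + 1"
  shows "independent (lift b ` W)" "(0, 0, 1) \<notin> span (lift b ` W)"
proof -
  define w :: "(real^'s) \<times> (real^'n) \<times> real" where "w = (\<chi> i. lam A b xi i, xi, -1)"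
  have "w \<bullet> x = 0" if "x \<in> lift b ` W" for x
    using that W unfolding w_def lift_def active_def by (auto simp: inner_Pair inner_axis)
  then have "span (lift b ` W) \<subseteq> {x. w \<bullet> x = 0}"
    by (intro span_minimal) (auto simp: subspace_hyperplane)
  moreover have "w \<bullet> (0, 0, 1) \<noteq> 0" unfolding w_def by (simp add: inner_Pair)
  ultimately show n01: "(0, 0, 1) \<notin> span (lift b ` W)" by auto
  have "lift b ` W \<subseteq> lifting_vectors A b"
    using W active_subset_Sigma unfolding lifting_vectors_eq by blast
  moreover have "card (lift b ` W) = card W" using inj_lift by (metis card_image inj_on_subset subset_UNIV)
  ultimately show "independent (lift b ` W)"
    using gp card n01 unfolding general_position_def by auto
qed

lemma dim_Un_le_card:
  fixes S Z :: "'a::euclidean_space set"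
  assumes "finite Z"
  shows "dim (S \<union> Z) \<le> dim S + card Z"
  using assms
proof (induction Z rule: finite_induct)
  case (insert z Z)
  have "dim (S \<union> insert z Z) \<le> dim (S \<union> Z) + 1"
    by (simp add: dim_insert)
  then show ?case using insert by simp
qed simp

text \<open>Within the span of the lifts, which misses \<open>(0, 0, 1)\<close>, the vectors with vanishing
  first two components are zero; so the projection to \<open>\<real>\<^sup>n\<close> is injective on the span of the
  lifted block differences.\<close>
lemma dim_lifted_block_diffs_le:
  fixes W :: "('s::finite \<times> (real^'n::finite)) set"
  assumes r: "\<And>i. (i, r i) \<in> W" and n01: "(0, 0, 1) \<notin> span (lift b ` W)"
  shows "dim ((\<lambda>(i, a). lift b (i, a) - lift b (i, r i)) ` W) \<le> dim (block_diffs W)"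
proof -
  define B where "B = (\<lambda>(i, a). lift b (i, a) - lift b (i, r i)) ` W"
  define \<pi> :: "(real^'s) \<times> (real^'n) \<times> real \<Rightarrow> real^'n" where "\<pi> = fst \<circ> snd"
  have lin: "linear \<pi>" unfolding \<pi>_def by (rule linearI) auto
  have "B \<subseteq> span (lift b ` W)"
    using r unfolding B_def by (force intro: span_diff span_base)
  moreover have "B \<subseteq> {x. fst x = 0}"
    unfolding B_def lift_def by auto
  ultimately have "B \<subseteq> span (lift b ` W) \<inter> {x. fst x = 0}" by blast
  then have B_sub: "span B \<subseteq> span (lift b ` W) \<inter> {x. fst x = 0}"
    by (intro span_minimal subspace_inter subspace_span) (auto simp: subspace_def)
  have kernel: "x = 0" if "x \<in> span B" "\<pi> x = 0" for x
  proof -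
    have "fst x = 0" "fst (snd x) = 0" using that B_sub unfolding \<pi>_def by auto
    then obtain c where x: "x = (0, 0, c)" by (metis prod.collapse)
    have "(1 / c) *\<^sub>R x \<in> span (lift b ` W)"
      using that B_sub by (auto intro: span_mul)
    then have "c = 0" using n01 x by (cases "c = 0") auto
    then show "x = 0" using x by (simp add: zero_prod_def)
  qed
  have "inj_on \<pi> (span B)"
  proof (rule inj_onI)
    fix x y assume xy: "x \<in> span B" "y \<in> span B" "\<pi> x = \<pi> y"
    then have "x - y = 0" using linear_diff[OF lin] by (intro kernel span_diff) auto
    then show "x = y" by simp
  qed
  then have "dim B = dim (\<pi> ` B)" using lin by (simp add: dim_image_eq)
  also have "\<dots> \<le> dim (block_diffs W)"
    using r by (intro dim_subset) (force simp: B_def \<pi>_def lift_def block_diffs_def)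
  finally show ?thesis unfolding B_def .
qed

lemma card_le_dim_block_diffs:
  fixes W :: "('s::finite \<times> (real^'n::finite)) set"
  assumes fin: "finite W" and r: "\<And>i. (i, r i) \<in> W"
    and indep: "independent (lift b ` W)" and n01: "(0, 0, 1) \<notin> span (lift b ` W)"
  shows "card W - CARD('s) \<le> dim (block_diffs W)"
proof -
  define B where "B = (\<lambda>(i, a). lift b (i, a) - lift b (i, r i)) ` W"
  define Z where "Z = (\<lambda>i. lift b (i, r i)) ` UNIV"
  have "lift b ` W \<subseteq> span (B \<union> Z)"
  proof (rule image_subsetI)
    fix p assume "p \<in> W"
    moreover obtain i a where p: "p = (i, a)" by fastforce
    ultimately have "(lift b (i, a) - lift b (i, r i)) + lift b (i, r i) \<in> span (B \<union> Z)"
      unfolding B_def Z_def by (intro span_add span_base) auto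
    then show "lift b p \<in> span (B \<union> Z)" using p by simp
  qed
  then have "dim (lift b ` W) \<le> dim (B \<union> Z)"
    by (metis dim_span dim_subset)
  moreover have "dim (lift b ` W) = card W"
    using indep inj_lift by (metis dim_eq_card_independent card_image inj_on_subset subset_UNIV)
  moreover have "dim (B \<union> Z) \<le> dim B + CARD('s)"
    using dim_Un_le_card[of Z B] card_image_le[of UNIV "\<lambda>i. lift b (i, r i)"]
    unfolding Z_def by simp
  moreover have "dim B \<le> dim (block_diffs W)"
    unfolding B_def using r n01 by (rule dim_lifted_block_diffs_le)
  ultimately show ?thesis by linarith
qed

section \<open>Rays in an affine subspace\<close>

lemma diffs_affine_eq:
  assumes "affine S" "x0 \<in> S"
  shows "diffs S = (\<lambda>x. x - x0) ` S"
proof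
  show "diffs S \<subseteq> (\<lambda>x. x - x0) ` S"
  proof
    fix v assume "v \<in> diffs S"
    then obtain x y where v: "v = x - y" "x \<in> S" "y \<in> S" unfolding diffs_def by auto
    have "x0 + 1 *\<^sub>R (x - y) \<in> S" by (rule mem_affine_3_minus) (use assms v in auto)
    then show "v \<in> (\<lambda>x. x - x0) ` S" using v by (auto intro!: image_eqI[of _ _ "x0 + (x - y)"])
  qed
  show "(\<lambda>x. x - x0) ` S \<subseteq> diffs S" unfolding diffs_def using assms(2) by blast
qed

lemma subspace_diffs:
  assumes "affine S" "x0 \<in> S"
  shows "subspace (diffs S)"
  using diffs_affine_eq[OF assms] affine_diffs_subspace_subtract[OF assms] by simp

lemma add_diffs_mem:
  assumes "affine S" "x \<in> S" "v \<in> diffs S"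
  shows "x + v \<in> S"
  using assms diffs_affine_eq[OF assms(1,2)] by auto

lemma open_strict_linear_system:
  fixes \<alpha> \<beta> :: "'c \<Rightarrow> real"
  assumes "finite C"
  shows "open {t. \<forall>c\<in>C. \<alpha> c + t * \<beta> c < 0}"
proof -
  have "{t. \<forall>c\<in>C. \<alpha> c + t * \<beta> c < 0} = (\<Inter>c\<in>C. {t. \<alpha> c + t * \<beta> c < 0})" by auto
  then show ?thesis
    using assms by (auto intro!: open_INT open_Collect_less continuous_intros)
qed

lemma strict_linear_system_between:
  fixes \<alpha> \<beta> :: "'c \<Rightarrow> real"
  assumes "x \<in> {t. \<forall>c\<in>C. \<alpha> c + t * \<beta> c < 0}" "y \<in> {t. \<forall>c\<in>C. \<alpha> c + t * \<beta> c < 0}"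
    and "x \<le> t" "t \<le> y"
  shows "t \<in> {t. \<forall>c\<in>C. \<alpha> c + t * \<beta> c < 0}"
proof -
  have bound: "\<alpha> c + t * \<beta> c \<le> max (\<alpha> c + x * \<beta> c) (\<alpha> c + y * \<beta> c)" for c
    using assms(3,4) by (cases "\<beta> c \<ge> 0") (auto intro: mult_right_mono mult_right_mono_neg simp: max_def)
  have "\<alpha> c + t * \<beta> c < 0" if "c \<in> C" for c
  proof -
    have "max (\<alpha> c + x * \<beta> c) (\<alpha> c + y * \<beta> c) < 0" using assms(1,2) that by simp
    then show ?thesis using bound[of c] by linarith
  qed
  then show ?thesis by simp
qed

lemma strict_linear_system_interval:
  fixes \<alpha> \<beta> :: "'c \<Rightarrow> real"
  assumes fin: "finite C" and c0: "c0 \<in> C" "\<alpha> c0 = 0" "\<beta> c0 = -1"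
    and neg: "\<And>c. c \<in> C - {c0} \<Longrightarrow> \<alpha> c < 0"
  defines "S \<equiv> {t. \<forall>c\<in>C. \<alpha> c + t * \<beta> c < 0}"
  shows "S = {t. 0 < t \<and> ereal t < Sup (ereal ` S)}" and "0 < Sup (ereal ` S)"
proof -
  have open_S: "open S" unfolding S_def using fin by (rule open_strict_linear_system)
  have pos: "0 < t" if "t \<in> S" for t
  proof -
    have "\<alpha> c0 + t * \<beta> c0 < 0" using that c0(1) unfolding S_def by blast
    then show ?thesis using c0 by simp
  qed
  have "0 \<in> {t. \<forall>c\<in>C - {c0}. \<alpha> c + t * \<beta> c < 0}" using neg by simp
  then obtain e where e: "e > 0" "ball 0 e \<subseteq> {t. \<forall>c\<in>C - {c0}. \<alpha> c + t * \<beta> c < 0}"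
    using openE[OF open_strict_linear_system[OF finite_Diff[OF fin], where \<alpha>=\<alpha> and \<beta>=\<beta>]] by blast
  have small: "t \<in> S" if "0 < t" "t < e" for t
  proof -
    have "t \<in> ball 0 e" using that by (simp add: dist_real_def)
    then have "\<forall>c\<in>C - {c0}. \<alpha> c + t * \<beta> c < 0" using e(2) by blast
    moreover have "\<alpha> c0 + t * \<beta> c0 < 0" using c0 that by simp
    ultimately show ?thesis unfolding S_def by blast
  qed
  have up: "ereal t < Sup (ereal ` S)" if tS: "t \<in> S" for t
  proof -
    obtain e' where e': "e' > 0" "ball t e' \<subseteq> S" using openE[OF open_S tS] by blast
    then have "t + e'/2 \<in> S" by (auto simp: dist_real_def)
    then have "ereal (t + e'/2) \<le> Sup (ereal ` S)" by (intro Sup_upper) auto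
    moreover have "ereal t < ereal (t + e'/2)" using e' by simp
    ultimately show ?thesis by order
  qed
  have down: "t \<in> S" if t: "0 < t" "ereal t < Sup (ereal ` S)" for t
  proof -
    obtain s where s: "s \<in> S" "t < s" using t(2) by (auto simp: less_Sup_iff)
    show ?thesis
    proof (cases "t < e")
      case True then show ?thesis using small t(1) by blast
    next
      case False
      then have "e/2 \<le> t" using e(1) by simp
      moreover have "e/2 \<in> S" using small e(1) by simp
      ultimately show ?thesis using strict_linear_system_between[of "e/2" C \<alpha> \<beta> s t] s
        unfolding S_def by simp
    qed
  qed
  show "S = {t. 0 < t \<and> ereal t < Sup (ereal ` S)}" using pos up down by auto
  have "ereal (e/2) < Sup (ereal ` S)" using up[OF small[of "e/2"]] e(1) by simp
  then show "0 < Sup (ereal ` S)" using e(1) by (simp add: order.strict_trans[of 0 "ereal (e/2)"])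
qed

lemma positive_time_below:
  assumes "0 < (I :: ereal)"
  obtains e where "0 < e" "ereal e < I"
  using ereal_dense2[OF assms] by (metis zero_ereal_def ereal_less(2))

lemma aff_dim_open_ray:
  assumes "v \<noteq> 0" "0 < I"
  shows "aff_dim {x + t *\<^sub>R v | t. 0 < t \<and> ereal t < I} = 1"
proof -
  let ?R = "{x + t *\<^sub>R v | t. 0 < t \<and> ereal t < I}"
  obtain e where e: "0 < e" "ereal e < I" using positive_time_below[OF assms(2)] .
  have "?R \<subseteq> affine hull {x, x + v}"
  proof
    fix y assume "y \<in> ?R"
    then obtain t where "y = x + t *\<^sub>R v" by blast
    then have "y = (1 - t) *\<^sub>R x + t *\<^sub>R (x + v)" by (simp add: algebra_simps)
    then show "y \<in> affine hull {x, x + v}" unfolding affine_hull_2 by force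
  qed
  then have "aff_dim ?R \<le> aff_dim (affine hull {x, x + v})" by (rule aff_dim_subset)
  also have "\<dots> = 1" using assms(1) by (simp add: aff_dim_affine_hull)
  finally have le: "aff_dim ?R \<le> 1" .
  have "ereal (e/2) < I" using e order.strict_trans[of "ereal (e/2)" "ereal e" I] by simp
  moreover have "0 < e/2" using e(1) by simp
  ultimately have "x + e *\<^sub>R v \<in> ?R" "x + (e/2) *\<^sub>R v \<in> ?R"
    using e by blast+
  then have "aff_dim {x + e *\<^sub>R v, x + (e/2) *\<^sub>R v} \<le> aff_dim ?R" by (intro aff_dim_subset) auto
  moreover have "x + e *\<^sub>R v \<noteq> x + (e/2) *\<^sub>R v" using assms(1) e(1) by simp
  ultimately show ?thesis using le by simp
qed

lemma is_endpoint_open_ray: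
  assumes "v \<noteq> 0" "0 < I"
  shows "is_endpoint x {x + t *\<^sub>R v | t. 0 < t \<and> ereal t < I}"
  unfolding is_endpoint_def
proof
  obtain e where e: "0 < e" "ereal e < I" using positive_time_below[OF assms(2)] .
  show "x \<in> closure {x + t *\<^sub>R v | t. 0 < t \<and> ereal t < I}"
    unfolding closure_approachable
  proof (intro allI impI)
    fix \<epsilon> :: real assume "\<epsilon> > 0"
    define t where "t = min e (\<epsilon> / (2 * norm v))"
    have t: "0 < t" "ereal t < I"
      using e \<open>\<epsilon> > 0\<close> assms(1) by (auto simp: t_def intro: order.strict_trans1[OF _ e(2)])
    have "t * norm v \<le> \<epsilon> / (2 * norm v) * norm v"
      by (intro mult_right_mono) (auto simp: t_def)
    also have "\<dots> < \<epsilon>" using assms(1) \<open>\<epsilon> > 0\<close> by simp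
    finally have "dist (x + t *\<^sub>R v) x < \<epsilon>" using t by (simp add: dist_norm)
    then show "\<exists>y\<in>{x + t *\<^sub>R v | t. 0 < t \<and> ereal t < I}. dist y x < \<epsilon>" using t by blast
  qed
  show "x \<notin> {x + t *\<^sub>R v | t. 0 < t \<and> ereal t < I}" using assms(1) by auto
qed

section \<open>The edges at a vertex\<close>

lemma admissible_seq_unique_jump:
  fixes \<mu> :: "'s::finite \<Rightarrow> nat"
  assumes "admissible_seq m n md" "1 \<le> d" "d \<le> n"
    and ge: "\<And>i. md (d - 1) i \<le> \<mu> i" and sum: "(\<Sum>i\<in>UNIV. \<mu> i) = d"
  shows "\<exists>!q. \<mu> q = md (d - 1) q + 1"
    and "\<mu> q = md (d - 1) q + 1 \<Longrightarrow> i \<noteq> q \<Longrightarrow> \<mu> i = md (d - 1) i"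
proof -
  have "(\<Sum>i\<in>UNIV. md (d - 1) i) = d - 1"
    using assms(1,3) unfolding admissible_seq_def by auto
  then have "(\<Sum>i\<in>UNIV. \<mu> i - md (d - 1) i) = 1"
    using sum assms(2) sum_subtractf_nat[of UNIV "\<lambda>i. md (d - 1) i" \<mu>] ge by simp
  then obtain p where p: "\<mu> p - md (d - 1) p = 1"
    and zero: "\<And>i. i \<noteq> p \<Longrightarrow> \<mu> i - md (d - 1) i = 0"
    using sum_eq_1_iff[of UNIV "\<lambda>i. \<mu> i - md (d - 1) i"] by auto
  have others: "\<mu> i = md (d - 1) i" if "i \<noteq> p" for i
    using zero[OF that] ge[of i] by simp
  have jump: "\<mu> i = md (d - 1) i + 1 \<longleftrightarrow> i = p" for i
    using p others[of i] by (cases "i = p") auto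
  show "\<exists>!q. \<mu> q = md (d - 1) q + 1" using jump by (intro ex1I[of _ p]) auto
  show "\<mu> q = md (d - 1) q + 1 \<Longrightarrow> i \<noteq> q \<Longrightarrow> \<mu> i = md (d - 1) i"
    using jump others by metis
qed

text \<open>In the locale \<open>Act\<close> is the active set at \<open>\<xi>\<close>, \<open>Q i\<close> its block in \<open>A\<^sub>i\<close>,
  \<open>W a\<close> the active set with \<open>(q, a)\<close> released, and \<open>Delta a\<close>, \<open>ray_bound a\<close> are the
  \<open>\<Delta>\<^sub>j\<close>, \<open>I\<^sub>j\<close> of the statement.\<close>
locale Xd_vertex =
  fixes A :: "'s::finite \<Rightarrow> (real^'n::finite) set"
    and b :: "'s \<Rightarrow> real^'n \<Rightarrow> real"
    and F :: "nat \<Rightarrow> (real^'n) set"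
    and md :: "nat \<Rightarrow> 's \<Rightarrow> nat"
    and d :: nat
    and xi :: "real^'n"
    and q :: 's
  assumes general_position: "general_position A b"
    and finite_A: "finite (A i)"
    and nonempty_A: "A i \<noteq> {}"
    and affine_F: "affine (F d)"
    and xi_in_F: "xi \<in> F d"
    and generic: "W \<subseteq> Sigma UNIV A \<Longrightarrow>
                  dim (diffs (F d) \<inter> tie_space W) = d + dim (tie_space W) - CARD('n)"
    and d_le: "d \<le> CARD('n)"
    and mult_q: "mult_at A b xi q = md (d - 1) q + 1"
    and mult_other: "i \<noteq> q \<Longrightarrow> mult_at A b xi i = md (d - 1) i"
    and sum_mult: "(\<Sum>i\<in>UNIV. mult_at A b xi i) = d"
begin

definition "Act = active A b xi"

definition "Q i = {a \<in> A i. (i, a) \<in> Act}"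

definition "W a = Act - {(q, a)}"

lemma finite_Q: "finite (Q i)"
  unfolding Q_def using finite_A by simp

lemma card_Q: "card (Q i) = mult_at A b xi i + 1"
  unfolding Q_def Act_def by (rule card_active_fibre[where A=A, OF finite_A nonempty_A])

lemma Q_nonempty: "Q i \<noteq> {}"
  using card_Q[of i] by auto

lemma Act_eq_Sigma: "Act = Sigma UNIV Q"
  unfolding Q_def Act_def using active_subset_Sigma by blast

lemma finite_Act: "finite Act"
  unfolding Act_eq_Sigma using finite_Q by simp

lemma card_Act: "card Act = d + CARD('s)"
proof -
  have "card Act = (\<Sum>i\<in>UNIV. card (Q i))"
    unfolding Act_eq_Sigma using finite_Q by (simp add: card_SigmaI)
  also have "\<dots> = d + CARD('s)" using sum_mult by (simp add: card_Q sum_Suc)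
  finally show ?thesis .
qed

lemma Act_level: "(i, x) \<in> Act \<Longrightarrow> xi \<bullet> x - b i x = lam A b xi i"
  unfolding Act_def active_def by auto

lemma Act_subset_Sigma: "Act \<subseteq> Sigma UNIV A"
  unfolding Act_def by (rule active_subset_Sigma)

lemma card_Qq: "card (Q q) = md (d - 1) q + 2"
  using card_Q[of q] mult_q by simp

lemma Qq_other:
  obtains a' where "a' \<in> Q q" "a' \<noteq> a"
proof -
  have "\<not> Q q \<subseteq> {a}"
    using card_mono[of "{a}" "Q q"] card_Qq by auto
  then show ?thesis using that by blast
qed

lemma W_subset_Act: "W a \<subseteq> Act"
  unfolding W_def by auto

lemma Act_fibres:
  obtains r where "\<And>i. (i, r i) \<in> Act"
proof -
  have "\<forall>i. \<exists>x. (i, x) \<in> Act" using Q_nonempty unfolding Q_def by blast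
  then show ?thesis using that by metis
qed

lemma W_fibres:
  assumes "a \<in> Q q"
  obtains r where "\<And>i. (i, r i) \<in> W a"
proof -
  have "\<exists>x. (i, x) \<in> W a" for i
  proof (cases "i = q")
    case True
    obtain a' where "a' \<in> Q q" "a' \<noteq> a" using Qq_other .
    then show ?thesis using True unfolding W_def Q_def by blast
  next
    case False
    obtain x where "x \<in> Q i" using Q_nonempty by blast
    then show ?thesis using False unfolding W_def Q_def by blast
  qed
  then show ?thesis using that by metis
qed

definition "dir = diffs (F d)"

lemma subspace_dir: "subspace dir"
  unfolding dir_def by (rule subspace_diffs[OF affine_F xi_in_F])

text \<open>General position makes the blocks of \<open>Act\<close> span \<open>d\<close> dimensions, and genericity of
  the flag then leaves no room for a common direction in \<open>F d\<close>.\<close>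
lemma dir_inter_tie_Act: "v \<in> dir \<Longrightarrow> v \<in> tie_space Act \<Longrightarrow> v = 0"
proof -
  assume v: "v \<in> dir" "v \<in> tie_space Act"
  obtain r where r: "\<And>i. (i, r i) \<in> Act" using Act_fibres by blast
  have "card Act \<le> CARD('n) + CARD('s) + 1" using card_Act d_le by simp
  then have "card Act - CARD('s) \<le> dim (block_diffs Act)"
    using independent_lift_active[OF general_position finite_A, of Act xi] r finite_Act
    unfolding Act_def by (intro card_le_dim_block_diffs) auto
  then have "d \<le> dim (block_diffs Act)" using card_Act by simp
  moreover have "dim (tie_space Act) + dim (block_diffs Act) = CARD('n)"
    by (rule dim_tie_space_add_dim_block_diffs)
  ultimately have "dim (dir \<inter> tie_space Act) = 0"
    using generic[OF Act_subset_Sigma] d_le unfolding dir_def by linarith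
  then show "v = 0" using v by (auto simp: dim_eq_0)
qed

text \<open>Within the block \<open>q\<close> the released point \<open>a\<close> can be traded for \<open>a' \<in> W a\<close>.\<close>
lemma tie_space_W_extend:
  assumes "a' \<in> Q q" "a' \<noteq> a" "v \<in> tie_space (W a)" "v \<bullet> (a - a') = 0"
  shows "v \<in> tie_space Act"
proof -
  define p where "p i x = (if (i, x) = (q, a) then a' else x)" for i x
  have p_W: "(i, p i x) \<in> W a" if "(i, x) \<in> Act" for i x
    using that assms(1,2) unfolding p_def W_def Q_def by auto
  have p_inner: "v \<bullet> x = v \<bullet> p i x" for i x
    using assms(4) unfolding p_def by (simp add: inner_diff_right)
  show ?thesis unfolding tie_space_def
  proof (intro CollectI allI impI)
    fix i x y assume xy: "(i, x) \<in> Act" "(i, y) \<in> Act"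
    have "v \<bullet> (p i x - p i y) = 0"
      using assms(3) p_W[OF xy(1)] p_W[OF xy(2)] unfolding tie_space_def by blast
    then show "v \<bullet> (x - y) = 0"
      using p_inner[of x i] p_inner[of y i] by (simp only: inner_diff_right)
  qed
qed

text \<open>Dropping \<open>(q, a)\<close> lowers the rank of the blocks by at most one, so genericity now
  yields a line of directions in \<open>F d\<close>; it is normalised so that moving along it lowers
  the level of \<open>a\<close> below its block at unit rate.\<close>
lemma ex_Delta:
  assumes a: "a \<in> Q q"
  shows "\<exists>\<Delta>. \<Delta> \<in> dir \<and> \<Delta> \<in> tie_space (W a) \<and> (\<forall>y\<in>Q q - {a}. \<Delta> \<bullet> (a - y) = -1)"
proof -
  obtain a' where a': "a' \<in> Q q" "a' \<noteq> a" using Qq_other .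
  obtain r where r: "\<And>i. (i, r i) \<in> W a" using W_fibres[OF a] by blast
  have "card (W a) = d + CARD('s) - 1"
    using a card_Act finite_Act unfolding W_def Q_def by (simp add: card_Diff_singleton)
  moreover have "finite (W a)" using finite_Act W_subset_Act by (rule finite_subset[rotated])
  ultimately have "dim (block_diffs (W a)) \<le> d - 1"
    using dim_block_diffs_le[OF _ r] by simp
  moreover have "dim (tie_space (W a)) + dim (block_diffs (W a)) = CARD('n)"
    by (rule dim_tie_space_add_dim_block_diffs)
  moreover have "dim (dir \<inter> tie_space (W a)) = d + dim (tie_space (W a)) - CARD('n)"
    using generic W_subset_Act Act_subset_Sigma unfolding dir_def by blast
  moreover have "1 \<le> d" using sum_mult member_le_sum[of q UNIV "mult_at A b xi"] mult_q by simp
  ultimately have "dim (dir \<inter> tie_space (W a)) \<noteq> 0" using d_le by linarith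
  then obtain v where v: "v \<in> dir" "v \<in> tie_space (W a)" "v \<noteq> 0" by (auto simp: dim_eq_0)
  define c where "c = v \<bullet> (a - a')"
  have "c \<noteq> 0"
    using tie_space_W_extend[OF a' v(2)] dir_inter_tie_Act v unfolding c_def by blast
  define \<Delta> where "\<Delta> = (- 1 / c) *\<^sub>R v"
  have "\<Delta> \<in> dir" "\<Delta> \<in> tie_space (W a)"
    unfolding \<Delta>_def using v subspace_dir subspace_tie_space by (blast intro: subspace_scale)+
  moreover have "\<Delta> \<bullet> (a - y) = -1" if y: "y \<in> Q q - {a}" for y
  proof -
    have "(q, y) \<in> W a" "(q, a') \<in> W a" using y a' unfolding W_def Q_def by auto
    then have "\<Delta> \<bullet> (a' - y) = 0" using \<open>\<Delta> \<in> tie_space (W a)\<close> unfolding tie_space_def by blast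
    moreover have "\<Delta> \<bullet> (a - a') = -1" using \<open>c \<noteq> 0\<close> unfolding \<Delta>_def c_def by simp
    ultimately show ?thesis by (simp add: inner_diff_right)
  qed
  ultimately show ?thesis by blast
qed

definition "Delta a = (SOME \<Delta>. \<Delta> \<in> dir \<and> \<Delta> \<in> tie_space (W a) \<and> (\<forall>y\<in>Q q - {a}. \<Delta> \<bullet> (a - y) = -1))"

lemma Delta:
  assumes "a \<in> Q q"
  shows Delta_dir: "Delta a \<in> dir"
    and Delta_tie: "Delta a \<in> tie_space (W a)"
    and Delta_slope: "y \<in> Q q \<Longrightarrow> y \<noteq> a \<Longrightarrow> Delta a \<bullet> (a - y) = -1"
  using someI_ex[OF ex_Delta[OF assms]] unfolding Delta_def[symmetric] by auto

lemma Delta_nonzero: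
  assumes "a \<in> Q q"
  shows "Delta a \<noteq> 0"
proof -
  obtain y where "y \<in> Q q" "y \<noteq> a" using Qq_other .
  then have "Delta a \<bullet> (a - y) = -1" using Delta_slope[OF assms] by blast
  then show ?thesis by auto
qed

lemma dir_inter_tie_W:
  assumes "a \<in> Q q" "u \<in> dir" "u \<in> tie_space (W a)"
  obtains t where "u = t *\<^sub>R Delta a"
proof -
  obtain y where y: "y \<in> Q q" "y \<noteq> a" using Qq_other .
  define t where "t = - (u \<bullet> (a - y))"
  have "u - t *\<^sub>R Delta a \<in> dir" "u - t *\<^sub>R Delta a \<in> tie_space (W a)"
    using assms Delta_dir Delta_tie subspace_dir subspace_tie_space
    by (auto intro!: subspace_diff subspace_scale)
  moreover have "(u - t *\<^sub>R Delta a) \<bullet> (a - y) = 0"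
    using Delta_slope[OF assms(1) y] unfolding t_def by (simp add: inner_diff_left inner_add_left)
  ultimately have "u - t *\<^sub>R Delta a = 0"
    using tie_space_W_extend[OF y] dir_inter_tie_Act by blast
  then show ?thesis using that[of t] by simp
qed

lemma W_subset_Sigma: "W a \<subseteq> Sigma UNIV A"
  using W_subset_Act Act_subset_Sigma by blast

definition "ray_times a = {t. active A b (xi + t *\<^sub>R Delta a) = W a}"

text \<open>Along the ray every block of \<open>W a\<close> stays tied, so only strict inequalities remain.\<close>
lemma ray_times_linear:
  assumes a: "a \<in> Q q"
  obtains \<alpha> \<beta> :: "'s \<times> (real^'n) \<Rightarrow> real"
  where "ray_times a = {t. \<forall>c\<in>Sigma UNIV A - W a. \<alpha> c + t * \<beta> c < 0}"
    and "\<alpha> (q, a) = 0" "\<beta> (q, a) = -1" "\<And>c. c \<in> Sigma UNIV A - Act \<Longrightarrow> \<alpha> c < 0"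
proof -
  obtain r where r: "\<And>i. (i, r i) \<in> W a" using W_fibres[OF a] by blast
  define \<alpha> where "\<alpha> = (\<lambda>(i, x). (xi \<bullet> x - b i x) - (xi \<bullet> r i - b i (r i)))"
  define \<beta> where "\<beta> = (\<lambda>(i, x). Delta a \<bullet> (x - r i))"
  have r_level: "xi \<bullet> r i - b i (r i) = lam A b xi i" for i
    using Act_level r W_subset_Act by blast
  have tied: "xi \<bullet> x - b i x = xi \<bullet> r i - b i (r i)" if "(i, x) \<in> W a" for i x
  proof -
    have "(i, x) \<in> Act" using that W_subset_Act by blast
    then show ?thesis using Act_level r_level by simp
  qed
  have "ray_times a = {t. \<forall>c\<in>Sigma UNIV A - W a. \<alpha> c + t * \<beta> c < 0}"
    unfolding ray_times_def \<alpha>_def \<beta>_def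
    using active_along_line[OF finite_A W_subset_Sigma r tied Delta_tie[OF a]]
    by (simp add: case_prod_unfold)
  moreover have "\<alpha> (q, a) = 0" "\<beta> (q, a) = -1"
  proof -
    have rq: "r q \<in> Q q" "r q \<noteq> a" using r[of q] Act_subset_Sigma unfolding W_def Q_def by auto
    have "(q, a) \<in> Act" using a unfolding Q_def by auto
    then show "\<alpha> (q, a) = 0" using Act_level r_level unfolding \<alpha>_def by simp
    show "\<beta> (q, a) = -1" using Delta_slope[OF a rq] unfolding \<beta>_def by simp
  qed
  moreover have "\<alpha> c < 0" if c: "c \<in> Sigma UNIV A - Act" for c
  proof -
    obtain i x where ix: "c = (i, x)" "x \<in> A i" "(i, x) \<notin> Act" using c by auto
    have "xi \<bullet> x - b i x \<le> lam A b xi i" using lam_ge[of A i, OF finite_A ix(2)] .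
    moreover have "xi \<bullet> x - b i x \<noteq> lam A b xi i" using ix unfolding Act_def active_def by auto
    ultimately show ?thesis using r_level unfolding \<alpha>_def ix(1) by simp
  qed
  ultimately show ?thesis using that by blast
qed

definition "ray_bound a = Sup (ereal ` ray_times a)"

lemma ray_times_eq:
  assumes a: "a \<in> Q q"
  shows "ray_times a = {t. 0 < t \<and> ereal t < ray_bound a}" and ray_bound_pos: "0 < ray_bound a"
proof -
  obtain \<alpha> \<beta> where ab: "ray_times a = {t. \<forall>c\<in>Sigma UNIV A - W a. \<alpha> c + t * \<beta> c < 0}"
    "\<alpha> (q, a) = 0" "\<beta> (q, a) = -1" "\<And>c. c \<in> Sigma UNIV A - Act \<Longrightarrow> \<alpha> c < 0"
    using ray_times_linear[OF a] by blast
  have "finite (Sigma UNIV A - W a)" using finite_A by simp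
  moreover have "(q, a) \<in> Sigma UNIV A - W a" using a unfolding W_def Q_def by simp
  moreover have "Sigma UNIV A - W a - {(q, a)} = Sigma UNIV A - Act"
    using a Act_subset_Sigma unfolding W_def Q_def by auto
  ultimately show "ray_times a = {t. 0 < t \<and> ereal t < ray_bound a}" "0 < ray_bound a"
    using strict_linear_system_interval[of "Sigma UNIV A - W a" "(q, a)" \<alpha> \<beta>] ab
    unfolding ray_bound_def by auto
qed

definition "released_edge a = {eta \<in> F d. active A b eta = W a}"

lemma released_edge_eq_ray:
  assumes a: "a \<in> Q q"
  shows "released_edge a = {xi + t *\<^sub>R Delta a | t. 0 < t \<and> ereal t < ray_bound a}"
proof -
  have "released_edge a = (\<lambda>t. xi + t *\<^sub>R Delta a) ` ray_times a"
  proof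
    show "(\<lambda>t. xi + t *\<^sub>R Delta a) ` ray_times a \<subseteq> released_edge a"
    proof clarify
      fix t assume "t \<in> ray_times a"
      moreover have "t *\<^sub>R Delta a \<in> dir" using subspace_dir Delta_dir[OF a] by (rule subspace_scale)
      ultimately show "xi + t *\<^sub>R Delta a \<in> released_edge a"
        using add_diffs_mem[OF affine_F xi_in_F] unfolding released_edge_def ray_times_def dir_def by simp
    qed
    show "released_edge a \<subseteq> (\<lambda>t. xi + t *\<^sub>R Delta a) ` ray_times a"
    proof
      fix eta assume eta: "eta \<in> released_edge a"
      then have "eta - xi \<in> dir" "eta - xi \<in> tie_space (W a)"
        using xi_in_F W_subset_Act diff_mem_tie_space[of "W a" A b eta xi]
        unfolding released_edge_def dir_def diffs_def Act_def by auto
      then obtain t where "eta - xi = t *\<^sub>R Delta a" using dir_inter_tie_W[OF a] by blast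
      then have "eta = xi + t *\<^sub>R Delta a" by (simp add: algebra_simps)
      moreover have "t \<in> ray_times a" using eta calculation unfolding released_edge_def ray_times_def by simp
      ultimately show "eta \<in> (\<lambda>t. xi + t *\<^sub>R Delta a) ` ray_times a" by blast
    qed
  qed
  then show ?thesis using ray_times_eq[OF a] by auto
qed

lemma W_fibre_card:
  assumes a: "a \<in> Q q"
  shows "card {x \<in> A i. (i, x) \<in> W a} = md (d - 1) i + 1"
proof (cases "i = q")
  case True
  have "{x \<in> A q. (q, x) \<in> W a} = Q q - {a}" unfolding W_def Q_def by auto
  then show ?thesis using True a card_Qq finite_Q by (simp add: card_Diff_singleton)
next
  case False
  then have "{x \<in> A i. (i, x) \<in> W a} = Q i" unfolding W_def Q_def by auto
  then show ?thesis using card_Q[of i] mult_other[OF False] by simp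
qed

lemma is_edge_released_edge:
  assumes a: "a \<in> Q q"
  shows "is_edge A b F md d (released_edge a)"
  unfolding is_edge_def
proof (intro exI conjI)
  show "\<forall>i. card {x \<in> A i. (i, x) \<in> W a} = md (d - 1) i + 1" using W_fibre_card[OF a] by blast
  show "released_edge a = {eta \<in> F d. active A b eta = W a}" unfolding released_edge_def ..
  show "aff_dim (released_edge a) = 1"
    using released_edge_eq_ray[OF a] aff_dim_open_ray[OF Delta_nonzero[OF a] ray_bound_pos[OF a]] by simp
qed

lemma is_endpoint_released_edge: "a \<in> Q q \<Longrightarrow> is_endpoint xi (released_edge a)"
  using released_edge_eq_ray is_endpoint_open_ray[OF Delta_nonzero ray_bound_pos] by simp

lemma edge_support_subset_Act:
  assumes "E = {eta \<in> F d. active A b eta = W'}" "is_endpoint xi E"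
  shows "W' \<subseteq> Act"
proof clarify
  fix i x assume ix: "(i, x) \<in> W'"
  have "E \<subseteq> {eta. (i, x) \<in> active A b eta}" using assms(1) ix by auto
  then have "closure E \<subseteq> {eta. (i, x) \<in> active A b eta}"
    by (rule closure_minimal) (rule closed_active_locus[where A=A, OF finite_A])
  then show "(i, x) \<in> Act" using assms(2) unfolding is_endpoint_def Act_def by auto
qed

lemma subset_Act_eq_W:
  assumes sub: "W' \<subseteq> Act" and card: "\<And>i. card {x \<in> A i. (i, x) \<in> W'} = md (d - 1) i + 1"
  obtains a where "a \<in> Q q" "W' = W a"
proof -
  let ?fib = "\<lambda>i. {x \<in> A i. (i, x) \<in> W'}"
  have fib_sub: "?fib i \<subseteq> Q i" for i using sub unfolding Q_def by auto
  have fib_eq: "?fib i = Q i" if "i \<noteq> q" for i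
    using fib_sub finite_Q card[of i] card_Q[of i] mult_other[OF that] by (simp add: card_subset_eq)
  have "finite (?fib q)" using finite_A by simp
  then have "\<not> Q q \<subseteq> ?fib q" using card[of q] card_Qq card_mono[of "?fib q" "Q q"] by auto
  then obtain a where a: "a \<in> Q q" "a \<notin> ?fib q" by blast
  have "?fib q = Q q - {a}"
    using fib_sub[of q] a finite_Q card[of q] card_Qq
    by (intro card_subset_eq) (auto simp: card_Diff_singleton)
  have "(i, x) \<in> W' \<longleftrightarrow> (i, x) \<in> W a" for i x
  proof -
    have "(i, x) \<in> W' \<longleftrightarrow> x \<in> ?fib i" using sub Act_subset_Sigma by auto
    moreover have "(i, x) \<in> W a \<longleftrightarrow> x \<in> Q i \<and> (i, x) \<noteq> (q, a)"
      using Act_subset_Sigma unfolding W_def Q_def by auto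
    ultimately show ?thesis using fib_eq[of i] \<open>?fib q = Q q - {a}\<close> by (cases "i = q") auto
  qed
  then have "W' = W a" by auto
  then show ?thesis using that a(1) by blast
qed

lemma edges_through_xi: "{E. is_edge A b F md d E \<and> is_endpoint xi E} = released_edge ` Q q"
proof (intro set_eqI iffI)
  fix E assume "E \<in> {E. is_edge A b F md d E \<and> is_endpoint xi E}"
  then obtain W' where W': "\<And>i. card {x \<in> A i. (i, x) \<in> W'} = md (d - 1) i + 1"
    "E = {eta \<in> F d. active A b eta = W'}" "is_endpoint xi E"
    unfolding is_edge_def by blast
  obtain a where "a \<in> Q q" "W' = W a"
    using subset_Act_eq_W[OF edge_support_subset_Act[OF W'(2,3)] W'(1)] by blast
  then show "E \<in> released_edge ` Q q" using W'(2) unfolding released_edge_def by blast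
next
  fix E assume "E \<in> released_edge ` Q q"
  then show "E \<in> {E. is_edge A b F md d E \<and> is_endpoint xi E}"
    using is_edge_released_edge is_endpoint_released_edge by blast
qed

lemma inj_on_released_edge: "inj_on released_edge (Q q)"
proof (rule inj_onI)
  fix a a' assume aa: "a \<in> Q q" "a' \<in> Q q" "released_edge a = released_edge a'"
  have "aff_dim (released_edge a) = 1"
    using released_edge_eq_ray[OF aa(1)] aff_dim_open_ray[OF Delta_nonzero[OF aa(1)] ray_bound_pos[OF aa(1)]]
    by simp
  then obtain eta where "eta \<in> released_edge a" by fastforce
  then have "W a = W a'" using aa(3) unfolding released_edge_def by auto
  then show "a = a'" using aa(1,2) unfolding W_def Q_def by blast
qed

lemma Delta_inner_Qq:
  assumes a: "a \<in> Q q" and xy: "x \<in> Q q" "y \<in> Q q"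
  shows "Delta a \<bullet> (x - y) = of_bool (y = a) - of_bool (x = a)"
proof -
  have level: "Delta a \<bullet> z = Delta a \<bullet> a + of_bool (z \<noteq> a)" if "z \<in> Q q" for z
  proof (cases "z = a")
    case False
    then show ?thesis using Delta_slope[OF a that] by (simp add: inner_diff_right)
  qed simp
  show ?thesis using level[OF xy(1)] level[OF xy(2)] by (simp add: inner_diff_right of_bool_def)
qed

text \<open>The sum of the directions ties every block of \<open>Act\<close>: in the block \<open>q\<close> the
  contributions \<open>\<plusminus>1\<close> of \<open>Delta x\<close> and \<open>Delta y\<close> cancel.\<close>
lemma sum_Delta: "(\<Sum>a\<in>Q q. Delta a) = 0"
proof (rule dir_inter_tie_Act)
  show "(\<Sum>a\<in>Q q. Delta a) \<in> dir"
    using subspace_dir Delta_dir by (rule subspace_sum)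
  show "(\<Sum>a\<in>Q q. Delta a) \<in> tie_space Act"
    unfolding tie_space_def
  proof (intro CollectI allI impI)
    fix i x y assume xy: "(i, x) \<in> Act" "(i, y) \<in> Act"
    show "(\<Sum>a\<in>Q q. Delta a) \<bullet> (x - y) = 0"
    proof (cases "i = q")
      case True
      then have "x \<in> Q q" "y \<in> Q q" using xy Act_subset_Sigma unfolding Q_def by auto
      then show ?thesis
        by (simp add: inner_sum_left Delta_inner_Qq sum.distrib sum_subtractf finite_Q)
    next
      case False
      then have "(i, x) \<in> W a" "(i, y) \<in> W a" for a using xy unfolding W_def by auto
      then have "Delta a \<bullet> (x - y) = 0" if "a \<in> Q q" for a
        using Delta_tie[OF that] unfolding tie_space_def by blast
      then show ?thesis by (simp add: inner_sum_left)
    qed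
  qed
qed

lemma edges_through_xi_enumerated:
  defines "k \<equiv> mult_at A b xi q + 1"
    and "Edges \<equiv> {E. is_edge A b F md d E \<and> is_endpoint xi E}"
  shows "k = md (d - 1) q + 2" and "finite Edges" and "card Edges = k"
    and "\<exists>(Delta' :: nat \<Rightarrow> real^'n) (I :: nat \<Rightarrow> ereal).
           (\<forall>j\<in>{1..k}. 0 < I j) \<and>
           Edges = (\<lambda>j. {xi + t *\<^sub>R Delta' j | t. 0 < t \<and> ereal t < I j}) ` {1..k} \<and>
           (\<Sum>j = 1..k. Delta' j) = 0"
proof -
  show k: "k = md (d - 1) q + 2" unfolding k_def using mult_q by simp
  have Edges: "Edges = released_edge ` Q q" unfolding Edges_def by (rule edges_through_xi)
  then show "finite Edges" using finite_Q by simp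
  show "card Edges = k"
    unfolding Edges k using card_image[OF inj_on_released_edge] card_Qq by simp
  obtain g where g: "bij_betw g {1..k} (Q q)"
    using ex_bij_betw_nat_finite_1[OF finite_Q] card_Qq unfolding k by metis
  then have g_in: "g j \<in> Q q" if "j \<in> {1..k}" for j using that by (auto simp: bij_betw_def)
  show "\<exists>(Delta' :: nat \<Rightarrow> real^'n) (I :: nat \<Rightarrow> ereal).
           (\<forall>j\<in>{1..k}. 0 < I j) \<and>
           Edges = (\<lambda>j. {xi + t *\<^sub>R Delta' j | t. 0 < t \<and> ereal t < I j}) ` {1..k} \<and>
           (\<Sum>j = 1..k. Delta' j) = 0"
  proof (intro exI conjI)
    show "\<forall>j\<in>{1..k}. 0 < (ray_bound \<circ> g) j" using g_in ray_bound_pos by simp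
    have "Edges = released_edge ` g ` {1..k}" using g Edges by (simp add: bij_betw_def)
    then show "Edges = (\<lambda>j. {xi + t *\<^sub>R (Delta \<circ> g) j | t. 0 < t \<and> ereal t < (ray_bound \<circ> g) j}) ` {1..k}"
      using g_in released_edge_eq_ray by (simp add: image_image)
    show "(\<Sum>j = 1..k. (Delta \<circ> g) j) = 0"
      using sum.reindex_bij_betw[OF g, of Delta] sum_Delta by simp
  qed
qed

end

theorem lemma3p1:
  fixes A :: "'s::finite \<Rightarrow> (real^'n) set"
    and b :: "'s \<Rightarrow> real^'n \<Rightarrow> real"
    and m :: "'s \<Rightarrow> nat"
    and md :: "nat \<Rightarrow> 's \<Rightarrow> nat"
    and F :: "nat \<Rightarrow> (real^'n) set"
    and d :: nat
    and xi :: "real^'n"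
  assumes "CARD('s) \<le> CARD('n)"
    and "\<forall>i. finite (A i) \<and> A i \<noteq> {}"
    and "\<forall>i. \<forall>a \<in> A i. \<forall>k. a $ k \<in> \<int>"
    and "(\<Sum>i\<in>UNIV. m i) = CARD('n)"
    and "general_position A b"
    and "affine_flag F"
    and "generic_flag A F"
    and "admissible_seq m CARD('n) md"
    and "1 \<le> d" and "d \<le> CARD('n)"
    and "is_vertex A b F md d xi"
  shows "(\<exists>!q. mult_at A b xi q = md (d - 1) q + 1) \<and>
         (\<forall>q. mult_at A b xi q = md (d - 1) q + 1 \<longrightarrow>
            (let k = mult_at A b xi q + 1;
                 Edges = {E. is_edge A b F md d E \<and> is_endpoint xi E}
             in k = md (d - 1) q + 2 \<and> finite Edges \<and> card Edges = k \<and>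
                (\<exists>(Delta :: nat \<Rightarrow> real^'n) (I :: nat \<Rightarrow> ereal).
                    (\<forall>j\<in>{1..k}. 0 < I j) \<and>
                    Edges = (\<lambda>j. {xi + t *\<^sub>R Delta j | t. 0 < t \<and> ereal t < I j}) ` {1..k} \<and>
                    (\<Sum>j = 1..k. Delta j) = 0)))"
proof -
  have xi: "xi \<in> F d" and ge: "\<And>i. md (d - 1) i \<le> mult_at A b xi i"
    and sum: "(\<Sum>i\<in>UNIV. mult_at A b xi i) = d"
    using assms(11) unfolding is_vertex_def Xd_def by auto
  note jump = admissible_seq_unique_jump[OF assms(8,9,10) ge sum]
  have vertex: "Xd_vertex A b F md d xi q" if q: "mult_at A b xi q = md (d - 1) q + 1" for q
    using assms(2,5,6,7,10) xi q jump(2)[OF q] sum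
    unfolding affine_flag_def generic_flag_def by unfold_locales auto
  show ?thesis
    unfolding Let_def using jump(1) Xd_vertex.edges_through_xi_enumerated[OF vertex] by blast
qed

end
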